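(* Let $N\ge 1$ and let $\mathcal{P}$ be the set of $M:=N(N+1)/2$ pairs $(i,j)$ with $1\le i\le j\le N$. For $p\in\mathcal{P}$ let $g_p\in\mathbb{R}$, $K_p\in[0,1]$, $a_p:=g_p^2K_p(1-K_p)$, $Z:=\sum_p\sqrt{a_p}$, and assume $\sum_p a_p>0$. For a budget $B>0$ let $\mathrm{Var}_\star:=Z^2/B$ (the minimum of $\sum_p a_p/s_p$ subject to $\sum_p s_p\le B$, $s_p\ge0$) and $\mathrm{Var}_{\mathrm{unif}}:=\sum_p a_p/(B/M)$ (the value under the uniform allocation $s_p=B/M$). Then $$\rho:=\frac{\mathrm{Var}_\star}{\mathrm{Var}_{\mathrm{unif}}}=\frac{Z^2}{M\sum_p a_p}\le 1,$$ with equality if and only if all $a_p$ are equal. Moreover, suppose the $g_p$ are the kernel ridge regression gradients: $K\in\mathbb{R}^{N\times N}$ is symmetric positive semi-definite with entries $K_{ij}=K_p\in[0,1]$, $\lambda>0$, $y\in\mathbb{R}^N$, $\alpha=(K+\lambda I)^{-1}y$, $\beta=(K+\lambda I)^{-1}\alpha$, and $g_{ij}=-2\lambda^2(\beta_i\alpha_j+\beta_j\alpha_i)$. If $\alpha$ is supported on a set $S\subset\{1,\dots,N\}$ with $|S|=m$, then $g$ is supported on $\mathcal{P}_S:=\{(i,j)\in\mathcal{P}: i\in S\text{ or }j\in S\}$, which has cardinality $|\mathcal{P}_S|=m(2N-m+1)/2$, and therefore $$\rho\le\frac{|\mathcal{P}_S|}{M}=\frac{m(2N-m+1)}{N(N+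1)}\approx\frac{2m}{N+1}.$$
   Context: $\rho$ compares the optimal pair-level shot allocation with uniform allocation for the first-order variance $\sum_p a_p/s_p$ of a loss evaluated at Bernoulli-mean kernel estimates with $\mathrm{Var}[\hat K_p]=K_p(1-K_p)/s_p$. *)

theory Defs
  imports Complex_Main
begin

definition pairs :: "nat \<Rightarrow> (nat \<times> nat) set" where
  "pairs N = {(i,j). 1 \<le> i \<and> i \<le> j \<and> j \<le> N}"

definition Mnum :: "nat \<Rightarrow> real" where
  "Mnum N = real N * (real N + 1) / 2"

definition acoef :: "(nat \<times> nat \<Rightarrow> real) \<Rightarrow> (nat \<times> nat \<Rightarrow> real) \<Rightarrow> nat \<times> nat \<Rightarrow> real" where
  "acoef g Kp p = (g p)^2 * Kp p * (1 - Kp p)"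

definition Zsum :: "nat \<Rightarrow> (nat \<times> nat \<Rightarrow> real) \<Rightarrow> (nat \<times> nat \<Rightarrow> real) \<Rightarrow> real" where
  "Zsum N g Kp = (\<Sum>p\<in>pairs N. sqrt (acoef g Kp p))"

definition var_star :: "nat \<Rightarrow> (nat \<times> nat \<Rightarrow> real) \<Rightarrow> (nat \<times> nat \<Rightarrow> real) \<Rightarrow> real \<Rightarrow> real" where
  "var_star N g Kp B = (Zsum N g Kp)^2 / B"

definition var_unif :: "nat \<Rightarrow> (nat \<times> nat \<Rightarrow> real) \<Rightarrow> (nat \<times> nat \<Rightarrow> real) \<Rightarrow> real \<Rightarrow> real" where
  "var_unif N g Kp B = (\<Sum>p\<in>pairs N. acoef g Kp p / (B / Mnum N))"

definition rho :: "nat \<Rightarrow> (nat \<times> nat \<Rightarrow> real) \<Rightarrow> (nat \<times> nat \<Rightarrow> real) \<Rightarrow> real \<Rightarrow> real" where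
  "rho N g Kp B = var_star N g Kp B / var_unif N g Kp B"

definition pairs_S :: "nat \<Rightarrow> nat set \<Rightarrow> (nat \<times> nat) set" where
  "pairs_S N S = {(i,j) \<in> pairs N. i \<in> S \<or> j \<in> S}"

definition reg_apply :: "nat \<Rightarrow> (nat \<Rightarrow> nat \<Rightarrow> real) \<Rightarrow> real \<Rightarrow> (nat \<Rightarrow> real) \<Rightarrow> nat \<Rightarrow> real" where
  "reg_apply N K lam x i = (\<Sum>j\<in>{1..N}. (K i j + (if i = j then lam else 0)) * x j)"

definition psd_sym :: "nat \<Rightarrow> (nat \<Rightarrow> nat \<Rightarrow> real) \<Rightarrow> bool" where
  "psd_sym N K \<longleftrightarrow> (\<forall>i\<in>{1..N}. \<forall>j\<in>{1..N}. K i j = K j i) \<and>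
     (\<forall>x :: nat \<Rightarrow> real. (\<Sum>i\<in>{1..N}. \<Sum>j\<in>{1..N}. x i * K i j * x j) \<ge> 0)"

end

theory Submission
  imports Defs "HOL-Analysis.Convex"
begin

text \<open>By Cauchy--Schwarz, \<open>Z\<^sup>2 = (\<Sum>p. \<surd>a\<^sub>p)\<^sup>2\<close> is at most the number of pairs carrying
  nonzero \<open>a\<^sub>p\<close> times \<open>\<Sum>p. a\<^sub>p\<close>, with equality over all of \<open>\<P>\<close> iff the \<open>\<surd>a\<^sub>p\<close> are
  constant; so \<open>\<rho> = Z\<^sup>2 / (M \<Sum>p. a\<^sub>p)\<close> is at most (size of the support of \<open>a\<close>)\<open>/M\<close>.
  The kernel ridge regression gradient \<open>g\<^sub>i\<^sub>j\<close> vanishes as soon as \<open>\<alpha>\<^sub>i = \<alpha>\<^sub>j = 0\<close>, so it is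
  supported on \<open>\<P>\<^sub>S\<close>, whose complement is the triangle of pairs over the \<open>N - m\<close> indices
  outside \<open>S\<close>.\<close>

lemma card_upper_triangle:
  fixes A :: "'a::linorder set"
  assumes "finite A"
  shows "2 * card {(i, j). i \<in> A \<and> j \<in> A \<and> i \<le> j} = card A * (card A + 1)"
proof -
  define L where "L = {(i, j). i \<in> A \<and> j \<in> A \<and> i \<le> j}"
  have finite_L: "finite L" and finite_swap_L: "finite (prod.swap ` L)"
    using finite_subset[of L "A \<times> A"] assms by (auto simp: L_def)
  have union: "L \<union> prod.swap ` L = A \<times> A"
    by (auto simp: L_def image_iff)
  have inter: "L \<inter> prod.swap ` L = (\<lambda>i. (i, i)) ` A"
    by (auto simp: L_def)
  have "card L + card (prod.swap ` L) = card (L \<union> prod.swap ` L) + card (L \<inter> prod.swap ` L)"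
    using card_Un_Int[OF finite_L finite_swap_L] .
  moreover have "card (prod.swap ` L) = card L"
    by (rule card_image[OF inj_swap])
  ultimately have "2 * card L = card A * card A + card A"
    by (simp add: union inter card_image inj_on_def card_cartesian_product)
  then show ?thesis
    by (simp add: L_def algebra_simps)
qed

lemma sum_pairwise_diff_squared:
  fixes x :: "'a \<Rightarrow> real"
  shows "(\<Sum>p\<in>P. \<Sum>q\<in>P. (x p - x q)\<^sup>2) = 2 * (card P * (\<Sum>p\<in>P. (x p)\<^sup>2) - (\<Sum>p\<in>P. x p)\<^sup>2)"
proof -
  have "(\<Sum>p\<in>P. \<Sum>q\<in>P. (x p - x q)\<^sup>2) =
      (\<Sum>p\<in>P. \<Sum>q\<in>P. (x p)\<^sup>2) + (\<Sum>p\<in>P. \<Sum>q\<in>P. (x q)\<^sup>2) - 2 * (\<Sum>p\<in>P. \<Sum>q\<in>P. x p * x q)"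
    by (simp add: power2_diff sum.distrib sum_subtractf sum_distrib_left mult.assoc)
  also have "(\<Sum>p\<in>P. \<Sum>q\<in>P. x p * x q) = (\<Sum>p\<in>P. x p)\<^sup>2"
    by (simp add: power2_eq_square sum_product)
  finally show ?thesis
    by (simp add: sum_distrib_left algebra_simps)
qed

lemma sum_squared_eq_card_mult_sum_of_squares_iff:
  fixes x :: "'a \<Rightarrow> real"
  assumes "finite P"
  shows "(\<Sum>p\<in>P. x p)\<^sup>2 = card P * (\<Sum>p\<in>P. (x p)\<^sup>2) \<longleftrightarrow> (\<forall>p\<in>P. \<forall>q\<in>P. x p = x q)"
proof -
  have "(\<Sum>p\<in>P. x p)\<^sup>2 = card P * (\<Sum>p\<in>P. (x p)\<^sup>2) \<longleftrightarrow> (\<Sum>p\<in>P. \<Sum>q\<in>P. (x p - x q)\<^sup>2) = 0"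
    using sum_pairwise_diff_squared[of x P] by argo
  also have "\<dots> \<longleftrightarrow> (\<forall>p\<in>P. \<forall>q\<in>P. (x p - x q)\<^sup>2 = 0)"
    using assms by (simp add: sum_nonneg sum_nonneg_eq_0_iff)
  finally show ?thesis
    by simp
qed

lemma sum_sqrt_squared_le_card_support:
  fixes a :: "'a \<Rightarrow> real"
  assumes "finite P" "Q \<subseteq> P" "\<forall>p\<in>P - Q. a p = 0" "\<forall>p\<in>P. 0 \<le> a p"
  shows "(\<Sum>p\<in>P. sqrt (a p))\<^sup>2 \<le> card Q * (\<Sum>p\<in>P. a p)"
proof -
  have "(\<Sum>p\<in>P. sqrt (a p)) = (\<Sum>p\<in>Q. sqrt (a p))" "(\<Sum>p\<in>P. a p) = (\<Sum>p\<in>Q. a p)"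
    using assms by (auto intro: sum.mono_neutral_right)
  moreover have "(\<Sum>p\<in>Q. a p) = (\<Sum>p\<in>Q. (sqrt (a p))\<^sup>2)"
    using assms by (intro sum.cong) auto
  ultimately show ?thesis
    using sum_squared_le_sum_of_squares[of "\<lambda>p. sqrt (a p)" Q] by (simp add: mult.commute)
qed

lemma finite_pairs: "finite (pairs N)"
  by (rule finite_subset[of _ "{1..N} \<times> {1..N}"]) (auto simp: pairs_def)

lemma card_pairs: "real (card (pairs N)) = Mnum N"
proof -
  have "pairs N = {(i, j). i \<in> {1..N} \<and> j \<in> {1..N} \<and> i \<le> j}"
    by (auto simp: pairs_def)
  then have "2 * card (pairs N) = N * (N + 1)"
    using card_upper_triangle[of "{1..N}"] by simp
  then have "2 * real (card (pairs N)) = real N * (real N + 1)"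
    by (metis of_nat_1 of_nat_add of_nat_mult of_nat_numeral)
  then show ?thesis
    by (simp add: Mnum_def)
qed

lemma acoef_nonneg: "0 \<le> Kp p \<Longrightarrow> Kp p \<le> 1 \<Longrightarrow> 0 \<le> acoef g Kp p"
  by (simp add: acoef_def)

lemma rho_eq:
  assumes "B \<noteq> 0"
  shows "rho N g Kp B = (Zsum N g Kp)\<^sup>2 / (Mnum N * (\<Sum>p\<in>pairs N. acoef g Kp p))"
proof -
  have "var_unif N g Kp B = (\<Sum>p\<in>pairs N. acoef g Kp p) * Mnum N / B"
    by (simp add: var_unif_def sum_divide_distrib[symmetric] sum_distrib_right)
  then show ?thesis
    using assms by (simp add: rho_def var_star_def mult.commute)
qed

lemma rho_le_card_support:
  assumes "B \<noteq> 0" "\<forall>p\<in>pairs N. 0 \<le> Kp p \<and> Kp p \<le> 1"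
    and "Q \<subseteq> pairs N" "\<forall>p\<in>pairs N - Q. g p = 0"
  shows "rho N g Kp B \<le> card Q / Mnum N"
proof -
  let ?A = "\<Sum>p\<in>pairs N. acoef g Kp p"
  have "0 \<le> ?A" and "0 \<le> Mnum N"
    using assms(2) by (auto intro: sum_nonneg acoef_nonneg simp: Mnum_def)
  moreover have "(Zsum N g Kp)\<^sup>2 \<le> card Q * ?A"
    unfolding Zsum_def using assms(2-4)
    by (intro sum_sqrt_squared_le_card_support finite_pairs) (auto simp: acoef_def)
  ultimately show ?thesis
    by (cases "Mnum N * ?A = 0") (auto simp: rho_eq assms(1) divide_le_eq field_simps)
qed

lemma rho_eq_1_iff:
  assumes "B \<noteq> 0" "\<forall>p\<in>pairs N. 0 \<le> Kp p \<and> Kp p \<le> 1" "(\<Sum>p\<in>pairs N. acoef g Kp p) > 0"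
  shows "rho N g Kp B = 1 \<longleftrightarrow> (\<forall>p\<in>pairs N. \<forall>q\<in>pairs N. acoef g Kp p = acoef g Kp q)"
proof -
  let ?A = "\<Sum>p\<in>pairs N. acoef g Kp p"
  have "pairs N \<noteq> {}"
    using assms(3) by auto
  then have "Mnum N * ?A \<noteq> 0"
    using assms(3) card_pairs[of N] finite_pairs[of N] by (metis card_gt_0_iff less_irrefl
        mult_pos_pos of_nat_0_less_iff)
  then have "rho N g Kp B = 1 \<longleftrightarrow> (\<Sum>p\<in>pairs N. sqrt (acoef g Kp p))\<^sup>2 = card (pairs N) * ?A"
    by (simp add: rho_eq assms(1) Zsum_def card_pairs) argo
  also have "?A = (\<Sum>p\<in>pairs N. (sqrt (acoef g Kp p))\<^sup>2)"
    using assms(2) acoef_nonneg by (intro sum.cong) auto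
  finally show ?thesis
    by (simp add: sum_squared_eq_card_mult_sum_of_squares_iff finite_pairs)
qed

lemma pairs_diff_pairs_S:
  "pairs N - pairs_S N S = {(i, j). i \<in> {1..N} - S \<and> j \<in> {1..N} - S \<and> i \<le> j}"
  by (auto simp: pairs_S_def pairs_def)

lemma card_pairs_S:
  assumes "S \<subseteq> {1..N}"
  shows "real (card (pairs_S N S)) = card S * (2 * real N - card S + 1) / 2"
proof -
  have card_S_le: "card S \<le> N"
    using card_mono[OF _ assms] by simp
  have sub: "pairs_S N S \<subseteq> pairs N"
    by (auto simp: pairs_S_def)
  have "2 * card (pairs N - pairs_S N S) = (N - card S) * (N - card S + 1)"
    using card_upper_triangle[of "{1..N} - S"] assms
    by (simp add: pairs_diff_pairs_S card_Diff_subset finite_subset)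
  then have "2 * real (card (pairs N - pairs_S N S)) = (real N - card S) * (real N - card S + 1)"
    using card_S_le by (metis of_nat_1 of_nat_add of_nat_diff of_nat_mult of_nat_numeral)
  moreover have "real (card (pairs_S N S)) = Mnum N - card (pairs N - pairs_S N S)"
    using card_Diff_subset[OF finite_subset[OF sub finite_pairs] sub] card_mono[OF finite_pairs sub]
    by (simp add: card_pairs[symmetric] of_nat_diff)
  ultimately show ?thesis
    by (simp add: Mnum_def field_simps)
qed

lemma krr_gradient_vanishes_off_pairs_S:
  fixes g :: "nat \<times> nat \<Rightarrow> real"
  assumes "\<forall>i j. g (i, j) = c * (\<beta> i * \<alpha> j + \<beta> j * \<alpha> i)" "\<forall>i\<in>{1..N} - S. \<alpha> i = 0"
  shows "\<forall>p\<in>pairs N - pairs_S N S. g p = 0"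
proof
  fix p
  assume "p \<in> pairs N - pairs_S N S"
  then obtain i j where "p = (i, j)" "\<alpha> i = 0" "\<alpha> j = 0"
    using assms(2) by (auto simp: pairs_diff_pairs_S)
  then show "g p = 0"
    using assms(1) by simp
qed

theorem theorem1:
  fixes N :: nat
  assumes "N \<ge> 1"
  shows
   "(\<forall>(g :: nat \<times> nat \<Rightarrow> real) (Kp :: nat \<times> nat \<Rightarrow> real) (B :: real).
       (\<forall>p\<in>pairs N. 0 \<le> Kp p \<and> Kp p \<le> 1) \<and>
       (\<Sum>p\<in>pairs N. acoef g Kp p) > 0 \<and> B > 0 \<longrightarrow>
         rho N g Kp B = (Zsum N g Kp)^2 / (Mnum N * (\<Sum>p\<in>pairs N. acoef g Kp p)) \<and>
         rho N g Kp B \<le> 1 \<and>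
         (rho N g Kp B = 1 \<longleftrightarrow> (\<forall>p\<in>pairs N. \<forall>q\<in>pairs N. acoef g Kp p = acoef g Kp q)))
    \<and>
    (\<forall>(K :: nat \<Rightarrow> nat \<Rightarrow> real) (lam :: real) (y :: nat \<Rightarrow> real)
       (\<alpha> :: nat \<Rightarrow> real) (\<beta> :: nat \<Rightarrow> real) (g :: nat \<times> nat \<Rightarrow> real)
       (S :: nat set) (m :: nat) (B :: real).
       psd_sym N K \<and>
       (\<forall>i\<in>{1..N}. \<forall>j\<in>{1..N}. 0 \<le> K i j \<and> K i j \<le> 1) \<and>
       lam > 0 \<and>
       (\<forall>i\<in>{1..N}. reg_apply N K lam \<alpha> i = y i) \<and>
       (\<forall>i\<in>{1..N}. reg_apply N K lam \<beta> i = \<alpha> i) \<and>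
       (\<forall>i j. g (i, j) = - 2 * lam^2 * (\<beta> i * \<alpha> j + \<beta> j * \<alpha> i)) \<and>
       S \<subseteq> {1..N} \<and> card S = m \<and>
       (\<forall>i\<in>{1..N} - S. \<alpha> i = 0) \<and>
       (\<Sum>p\<in>pairs N. acoef g (\<lambda>(i, j). K i j) p) > 0 \<and> B > 0 \<longrightarrow>
         (\<forall>p\<in>pairs N - pairs_S N S. g p = 0) \<and>
         real (card (pairs_S N S)) = real m * (2 * real N - real m + 1) / 2 \<and>
         rho N g (\<lambda>(i, j). K i j) B \<le> real (card (pairs_S N S)) / Mnum N \<and>
         real (card (pairs_S N S)) / Mnum N = real m * (2 * real N - real m + 1) / (real N * (real N + 1)))"
proof (intro conjI allI impI; elim conjE)
  fix g Kp :: "nat \<times> nat \<Rightarrow> real" and B :: real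
  assume Kp_bounds: "\<forall>p\<in>pairs N. 0 \<le> Kp p \<and> Kp p \<le> 1"
    and A_pos: "(\<Sum>p\<in>pairs N. acoef g Kp p) > 0" and "B > 0"
  show "rho N g Kp B = (Zsum N g Kp)\<^sup>2 / (Mnum N * (\<Sum>p\<in>pairs N. acoef g Kp p))"
    using \<open>B > 0\<close> by (simp add: rho_eq)
  show "rho N g Kp B = 1 \<longleftrightarrow> (\<forall>p\<in>pairs N. \<forall>q\<in>pairs N. acoef g Kp p = acoef g Kp q)"
    using \<open>B > 0\<close> Kp_bounds A_pos by (intro rho_eq_1_iff) auto
  have "rho N g Kp B \<le> card (pairs N) / Mnum N"
    using \<open>B > 0\<close> Kp_bounds by (intro rho_le_card_support) auto
  then show "rho N g Kp B \<le> 1"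
    using assms by (simp add: card_pairs Mnum_def)
next
  fix K :: "nat \<Rightarrow> nat \<Rightarrow> real" and lam B :: real and y \<alpha> \<beta> :: "nat \<Rightarrow> real"
    and g :: "nat \<times> nat \<Rightarrow> real" and S :: "nat set" and m :: nat
  assume K_bounds: "\<forall>i\<in>{1..N}. \<forall>j\<in>{1..N}. 0 \<le> K i j \<and> K i j \<le> 1"
    and g_def: "\<forall>i j. g (i, j) = - 2 * lam\<^sup>2 * (\<beta> i * \<alpha> j + \<beta> j * \<alpha> i)"
    and S: "S \<subseteq> {1..N}" "card S = m" and support: "\<forall>i\<in>{1..N} - S. \<alpha> i = 0" and "B > 0"
  show g_vanishes: "\<forall>p\<in>pairs N - pairs_S N S. g p = 0"
    using krr_gradient_vanishes_off_pairs_S[OF g_def support] .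
  show card_eq: "real (card (pairs_S N S)) = real m * (2 * real N - real m + 1) / 2"
    using card_pairs_S S by simp
  show "rho N g (\<lambda>(i, j). K i j) B \<le> real (card (pairs_S N S)) / Mnum N"
    using \<open>B > 0\<close> K_bounds g_vanishes
    by (intro rho_le_card_support) (auto simp: pairs_def pairs_S_def)
  show "real (card (pairs_S N S)) / Mnum N = real m * (2 * real N - real m + 1) / (real N * (real N + 1))"
    using assms by (simp add: card_eq Mnum_def)
qed

end
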